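(* Let $n, k, r \ge 1$ be integers and let $S=\{(x_i,z_i)\}_{i=1}^n$ with $x_i\in\mathbb{R}^k$ pairwise distinct and $z_i\in\mathbb{R}^r$ arbitrary. Let $d_1,d_2\ge 1$ be integers satisfying $4\lfloor d_1/4\rfloor\,\lfloor d_2/(4r)\rfloor \ge n$ (in particular $d_1d_2\ge 4nr$). Then there exist weight matrices $W_1\in\mathbb{R}^{d_1\times k}$, $W_2\in\mathbb{R}^{d_2\times d_1}$, $W_3\in\mathbb{R}^{r\times d_2}$ and bias vectors $b_1\in\mathbb{R}^{d_1}$, $b_2\in\mathbb{R}^{d_2}$, $b_3\in\mathbb{R}^{r}$ such that the three-layer ReLU network $$g_\theta(x)=W_3\,\sigma\big(W_2\,\sigma(W_1x+b_1)+b_2\big)+b_3,\qquad \sigma(t)=\max(t,0)\text{ applied entrywise},$$ satisfies $g_\theta(x_i)=z_i$ for all $i=1,\dots,n$.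
   Context: A "three-layer ReLU network" with hidden widths $d_1,d_2$ means a fully connected feedforward map $\mathbb{R}^k\to\mathbb{R}^r$ with two hidden layers of widths $d_1$ and $d_2$, each followed by the entrywise ReLU activation $\sigma(t)=\max(t,0)$, and a final affine (linear plus bias, no activation) output layer, as written in the claim. *)

theory Defs
  imports "HOL-Analysis.Analysis"
begin

text \<open>Vectors in R^m are represented as functions nat => real, of which only
the coordinates 0..m-1 matter; a (p x q) matrix is nat => nat => real with
entries W i j for i < p, j < q.\<close>

definition relu :: "real \<Rightarrow> real" where
  "relu t = max t 0"

definition affine :: "nat \<Rightarrow> (nat \<Rightarrow> nat \<Rightarrow> real) \<Rightarrow> (nat \<Rightarrow> real) \<Rightarrow> (nat \<Rightarrow> real) \<Rightarrow> (nat \<Rightarrow> real)" where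
  "affine q W b x = (\<lambda>i. (\<Sum>j<q. W i j * x j) + b i)"

definition relu_net3 ::
  "nat \<Rightarrow> nat \<Rightarrow> nat \<Rightarrow>
   (nat \<Rightarrow> nat \<Rightarrow> real) \<Rightarrow> (nat \<Rightarrow> real) \<Rightarrow>
   (nat \<Rightarrow> nat \<Rightarrow> real) \<Rightarrow> (nat \<Rightarrow> real) \<Rightarrow>
   (nat \<Rightarrow> nat \<Rightarrow> real) \<Rightarrow> (nat \<Rightarrow> real) \<Rightarrow> (nat \<Rightarrow> real) \<Rightarrow> (nat \<Rightarrow> real)" where
  "relu_net3 k d1 d2 W1 b1 W2 b2 W3 b3 x =
     affine d2 W3 b3 (relu \<circ> affine d1 W2 b2 (relu \<circ> affine k W1 b1 x))"

end

theory Submission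
  imports Defs
begin

(* Choosing v outside the finitely many roots of the difference polynomials
   sum_l (x_i l - x_j l) v^l makes the projections t_i = sum_l v^l x_i l distinct;
   the first layer only ever sees these reals.  Sorted and padded with dummy points,
   they are cut into A = d1 div 4 groups of P = 4 (d2 div 4r) consecutive points.
   Four first-layer ReLUs per group form a bump that is an arbitrary affine function
   of t on the group and vanishes on all other groups, so every second-layer neuron
   can be made affine in t with coefficients chosen independently on each group.
   With the fixed output weights (-1)^l, P such neurons interpolate any nonnegative
   data on P increasing points: the l-th ReLU switches on between the (l-1)-th and
   l-th point, and its knot is placed so that the alternating sum of the active
   pieces passes through the data.  The output bias undoes the shift that makes the
   data nonnegative. *)

lemma exists_injective_power_projection:
  fixes x :: "'i \<Rightarrow> nat \<Rightarrow> real"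
  assumes "finite I"
    and distinct: "\<And>i j. i \<in> I \<Longrightarrow> j \<in> I \<Longrightarrow> i \<noteq> j \<Longrightarrow> \<exists>l<k. x i l \<noteq> x j l"
  shows "\<exists>v. inj_on (\<lambda>i. \<Sum>l<k. v ^ l * x i l) I"
proof -
  define roots where "roots i j = {v. (\<Sum>l\<le>k - 1. (x i l - x j l) * v ^ l) = 0}" for i j
  have "finite (roots i j)" if ij: "i \<in> I" "j \<in> I" "i \<noteq> j" for i j
  proof -
    obtain l where "l < k" "x i l \<noteq> x j l"
      using distinct[OF ij] by blast
    then show ?thesis
      unfolding roots_def by (intro polyfun_finite_roots[THEN iffD2]) (auto intro!: exI[of _ l])
  qed
  then have "finite (\<Union>i\<in>I. \<Union>j\<in>I - {i}. roots i j)"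
    using \<open>finite I\<close> by blast
  then obtain v where v: "v \<notin> (\<Union>i\<in>I. \<Union>j\<in>I - {i}. roots i j)"
    using ex_new_if_finite[OF infinite_UNIV_char_0] by blast
  have "i = j" if ij: "i \<in> I" "j \<in> I" and eq: "(\<Sum>l<k. v ^ l * x i l) = (\<Sum>l<k. v ^ l * x j l)" for i j
  proof (rule ccontr)
    assume "i \<noteq> j"
    then obtain l where "l < k" using distinct ij by blast
    then have "{..k - 1} = {..<k}" by auto
    moreover have "(\<Sum>l<k. (x i l - x j l) * v ^ l) = 0"
      using eq by (simp add: right_diff_distrib mult.commute[of _ "v ^ _"] sum_subtractf)
    ultimately have "v \<in> roots i j" unfolding roots_def by simp
    with v ij \<open>i \<noteq> j\<close> show False by blast
  qed
  then show ?thesis by (auto intro: inj_onI)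
qed

lemma finite_real_set_strict_mono_enumeration:
  fixes T :: "real set"
  assumes "finite T"
  shows "\<exists>s. strict_mono s \<and> s ` {..<card T} = T"
proof -
  define L where "L = sorted_list_of_set T"
  define B where "B = Max (insert 0 T)"
  define s where "s \<rho> = (if \<rho> < card T then L ! \<rho> else B + real \<rho>)" for \<rho>
  have len: "length L = card T" and L_set: "set L = T" and sorted: "sorted_wrt (<) L"
    using assms by (simp_all add: L_def)
  have "t \<le> B" if "t \<in> T" for t
    using assms that by (simp add: B_def)
  then have "L ! \<rho> < B + real (Suc \<rho>)" if "\<rho> < card T" for \<rho>
    using that len L_set nth_mem[of \<rho> L] by fastforce
  then have "s \<rho> < s (Suc \<rho>)" for \<rho>
    using sorted_wrt_nth_less[OF sorted, of \<rho> "Suc \<rho>"] len by (simp add: s_def)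
  moreover have "s ` {..<card T} = T"
    using len L_set by (auto simp: s_def in_set_conv_nth image_iff)
  ultimately show ?thesis
    by (auto simp: strict_mono_Suc_iff)
qed

lemma relu_nonneg_eq: "0 \<le> t \<Longrightarrow> relu t = t"
  by (simp add: relu_def)

lemma relu_nonpos_eq: "t \<le> 0 \<Longrightarrow> relu t = 0"
  by (simp add: relu_def)

lemma sum_lessThan_4: "(\<Sum>e<4::nat. f e) = f 0 + f 1 + f 2 + (f 3 :: 'a :: comm_monoid_add)"
  by (simp add: eval_nat_numeral ac_simps)

(* The weights are the slope changes of the piecewise linear function that vanishes
   outside [c 0, c 3], equals \<alpha> + \<gamma> \<sigma> on [c 1, c 2] and is linear in between. *)
definition bump_weight :: "(nat \<Rightarrow> real) \<Rightarrow> real \<Rightarrow> real \<Rightarrow> nat \<Rightarrow> real" where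
  "bump_weight c \<alpha> \<gamma> e =
     (let u = (\<alpha> + \<gamma> * c 0) / (c 1 - c 0); w = (\<alpha> + \<gamma> * c 2) / (c 3 - c 2)
      in if e = 0 then \<gamma> + u else if e = 1 then - u else if e = 2 then - \<gamma> - w else w)"

definition relu_bump :: "(nat \<Rightarrow> real) \<Rightarrow> real \<Rightarrow> real \<Rightarrow> real \<Rightarrow> real" where
  "relu_bump c \<alpha> \<gamma> \<sigma> = (\<Sum>e<4. bump_weight c \<alpha> \<gamma> e * relu (\<sigma> - c e))"

lemma relu_bump_left:
  assumes "c 0 < c 1" "c 1 \<le> c 2" "c 2 < c 3" "\<sigma> \<le> c 0"
  shows "relu_bump c \<alpha> \<gamma> \<sigma> = 0"
  using assms by (simp add: relu_bump_def sum_lessThan_4 relu_nonpos_eq)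

lemma relu_bump_mid:
  assumes "c 0 < c 1" "c 2 < c 3" "c 1 \<le> \<sigma>" "\<sigma> \<le> c 2"
  shows "relu_bump c \<alpha> \<gamma> \<sigma> = \<alpha> + \<gamma> * \<sigma>"
proof -
  define u where "u = (\<alpha> + \<gamma> * c 0) / (c 1 - c 0)"
  have u: "u * (c 1 - c 0) = \<alpha> + \<gamma> * c 0"
    using assms by (simp add: u_def)
  have "relu_bump c \<alpha> \<gamma> \<sigma> = (\<gamma> + u) * (\<sigma> - c 0) - u * (\<sigma> - c 1)"
    using assms by (simp add: relu_bump_def bump_weight_def sum_lessThan_4 relu_nonneg_eq
        relu_nonpos_eq u_def Let_def)
  also have "\<dots> = \<alpha> + \<gamma> * \<sigma>"
    using u by (simp add: algebra_simps)
  finally show ?thesis .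
qed

lemma relu_bump_right:
  assumes "c 0 < c 1" "c 1 \<le> c 2" "c 2 < c 3" "c 3 \<le> \<sigma>"
  shows "relu_bump c \<alpha> \<gamma> \<sigma> = 0"
proof -
  define u where "u = (\<alpha> + \<gamma> * c 0) / (c 1 - c 0)"
  define w where "w = (\<alpha> + \<gamma> * c 2) / (c 3 - c 2)"
  have u: "u * (c 1 - c 0) = \<alpha> + \<gamma> * c 0" and w: "w * (c 3 - c 2) = \<alpha> + \<gamma> * c 2"
    using assms by (simp_all add: u_def w_def)
  have "relu_bump c \<alpha> \<gamma> \<sigma> =
      (\<gamma> + u) * (\<sigma> - c 0) - u * (\<sigma> - c 1) + (- \<gamma> - w) * (\<sigma> - c 2) + w * (\<sigma> - c 3)"
    using assms by (simp add: relu_bump_def bump_weight_def sum_lessThan_4 relu_nonneg_eq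
        u_def w_def Let_def)
  also have "\<dots> = 0"
    using u w by (simp add: algebra_simps)
  finally show ?thesis .
qed

(* Piece l > 0 is positive exactly right of its knot, which lies between s (l - 1) and
   s l once K exceeds the difference quotients of Y; the knots are placed so that the
   alternating sum of the pieces up to p passes through (s p, Y p). *)
definition zigzag_knot :: "real \<Rightarrow> (nat \<Rightarrow> real) \<Rightarrow> (nat \<Rightarrow> real) \<Rightarrow> nat \<Rightarrow> real" where
  "zigzag_knot K s Y l = (s (l - 1) + s l) / 2 - (-1) ^ l * (Y l - Y (l - 1)) / (2 * K)"

definition zigzag_piece :: "real \<Rightarrow> (nat \<Rightarrow> real) \<Rightarrow> (nat \<Rightarrow> real) \<Rightarrow> nat \<Rightarrow> real \<Rightarrow> real" where
  "zigzag_piece K s Y l \<sigma> =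
     (if l = 0 then Y 0 + K * (\<sigma> - s 0) else 2 * K * (\<sigma> - zigzag_knot K s Y l))"

lemma zigzag_piece_partial_sum:
  assumes "K \<noteq> 0"
  shows "(\<Sum>l\<le>p. (-1) ^ l * zigzag_piece K s Y l \<sigma>) = Y p + (-1) ^ p * K * (\<sigma> - s p)"
proof (induction p)
  case 0
  then show ?case by (simp add: zigzag_piece_def)
next
  case (Suc p)
  have "(\<Sum>l\<le>Suc p. (-1) ^ l * zigzag_piece K s Y l \<sigma>) =
      Y p + (-1) ^ p * K * (\<sigma> - s p) - (-1) ^ p * 2 * K * (\<sigma> - zigzag_knot K s Y (Suc p))"
    using Suc.IH by (simp add: zigzag_piece_def)
  also have "\<dots> = Y (Suc p) + (-1) ^ Suc p * K * (\<sigma> - s (Suc p))"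
    using assms by (cases "even p") (simp_all add: zigzag_knot_def field_simps)
  finally show ?case .
qed

lemma zigzag_knot_between:
  assumes "0 < K" "0 < l" "\<bar>Y l - Y (l - 1)\<bar> < K * (s l - s (l - 1))"
  shows "s (l - 1) < zigzag_knot K s Y l" "zigzag_knot K s Y l < s l"
proof -
  define a where "a = (-1) ^ l * (Y l - Y (l - 1)) / (2 * K)"
  have "\<bar>a\<bar> = \<bar>Y l - Y (l - 1)\<bar> / (2 * K)"
    using assms by (simp add: a_def abs_mult power_abs)
  also have "\<dots> < (s l - s (l - 1)) / 2"
    using assms by (simp add: field_simps)
  finally have "\<bar>a\<bar> < (s l - s (l - 1)) / 2" .
  moreover have "zigzag_knot K s Y l = (s (l - 1) + s l) / 2 - a"
    by (simp add: zigzag_knot_def a_def)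
  ultimately show "s (l - 1) < zigzag_knot K s Y l" "zigzag_knot K s Y l < s l"
    by (simp_all add: abs_less_iff field_simps)
qed

lemma zigzag_interpolates:
  assumes K: "0 < K" and mono: "strict_mono_on {..<N} s" and "0 \<le> Y 0"
    and slope: "\<And>l. 0 < l \<Longrightarrow> l < N \<Longrightarrow> \<bar>Y l - Y (l - 1)\<bar> < K * (s l - s (l - 1))"
    and "p < N"
  shows "(\<Sum>l<N. (-1) ^ l * relu (zigzag_piece K s Y l (s p))) = Y p"
proof -
  have relu_piece: "relu (zigzag_piece K s Y l (s p)) = (if l \<le> p then zigzag_piece K s Y l (s p) else 0)"
    if "l < N" for l
  proof (cases "l \<le> p")
    case True
    have "s l \<le> s p"
      using strict_mono_on_leD[OF mono] True \<open>p < N\<close> that by simp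
    moreover have "l \<noteq> 0 \<Longrightarrow> zigzag_knot K s Y l < s l"
      using zigzag_knot_between(2)[OF K] slope that by simp
    ultimately have "0 \<le> zigzag_piece K s Y l (s p)"
      using K \<open>0 \<le> Y 0\<close> by (auto simp: zigzag_piece_def)
    then show ?thesis
      using True by (simp add: relu_nonneg_eq)
  next
    case False
    then have "s p \<le> s (l - 1)"
      using strict_mono_on_leD[OF mono] that by simp
    moreover have "s (l - 1) < zigzag_knot K s Y l"
      using zigzag_knot_between(1)[OF K] slope False that by simp
    ultimately have "zigzag_piece K s Y l (s p) \<le> 0"
      using False K by (simp add: zigzag_piece_def mult_nonneg_nonpos)
    then show ?thesis
      using False by (simp add: relu_nonpos_eq)
  qed
  have "(\<Sum>l<N. (-1) ^ l * relu (zigzag_piece K s Y l (s p))) =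
      (\<Sum>l\<le>p. (-1) ^ l * zigzag_piece K s Y l (s p))"
    using \<open>p < N\<close> by (intro sum.mono_neutral_cong_right) (auto simp: relu_piece)
  also have "\<dots> = Y p"
    using K by (simp add: zigzag_piece_partial_sum)
  finally show ?thesis .
qed

lemma exists_alternating_relu_interpolant:
  fixes s Y :: "nat \<Rightarrow> real"
  assumes mono: "strict_mono_on {..<N} s" and "0 \<le> Y 0"
  shows "\<exists>\<alpha> \<gamma>. \<forall>p<N. (\<Sum>l<N. (-1) ^ l * relu (\<alpha> l + \<gamma> l * s p)) = Y p"
proof -
  define ratio where "ratio l = \<bar>Y l - Y (l - 1)\<bar> / (s l - s (l - 1))" for l
  define K where "K = 1 + (\<Sum>l\<in>{0<..<N}. ratio l)"
  have gap: "0 < s l - s (l - 1)" if "0 < l" "l < N" for l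
    using strict_mono_onD[OF mono] that by simp
  have ratio_nonneg: "0 \<le> ratio l" if "l \<in> {0<..<N}" for l
    using that gap[of l] unfolding ratio_def by (intro divide_nonneg_pos) auto
  have ratio_le: "ratio l \<le> K - 1" if "0 < l" "l < N" for l
  proof -
    have "ratio l \<le> (\<Sum>l\<in>{0<..<N}. ratio l)"
      using that by (intro member_le_sum ratio_nonneg) auto
    then show ?thesis by (simp add: K_def)
  qed
  have "0 \<le> (\<Sum>l\<in>{0<..<N}. ratio l)"
    using ratio_nonneg by (rule sum_nonneg)
  then have K: "0 < K"
    by (simp add: K_def)
  have slope: "\<bar>Y l - Y (l - 1)\<bar> < K * (s l - s (l - 1))" if "0 < l" "l < N" for l
  proof -
    have "\<bar>Y l - Y (l - 1)\<bar> \<le> (K - 1) * (s l - s (l - 1))"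
      using ratio_le[OF that] gap[OF that] by (simp add: ratio_def pos_divide_le_eq)
    then show ?thesis
      using gap[OF that] by (simp add: algebra_simps)
  qed
  have piece_affine:
    "zigzag_piece K s Y l 0 + (if l = 0 then K else 2 * K) * \<sigma> = zigzag_piece K s Y l \<sigma>" for l \<sigma>
    by (simp add: zigzag_piece_def algebra_simps)
  show ?thesis
  proof (intro exI allI impI)
    fix p assume "p < N"
    show "(\<Sum>l<N. (-1) ^ l * relu (zigzag_piece K s Y l 0 + (if l = 0 then K else 2 * K) * s p)) = Y p"
      unfolding piece_affine using K mono \<open>0 \<le> Y 0\<close> slope \<open>p < N\<close> by (rule zigzag_interpolates)
  qed
qed

(* The bump of group a (points s (a * P), ..., s (a * P + P - 1)) is supported between
   the adjacent points of the neighbouring groups; s 0 - 1 stands in for the missing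
   left neighbour of group 0. *)
definition group_cutoffs :: "(nat \<Rightarrow> real) \<Rightarrow> nat \<Rightarrow> nat \<Rightarrow> nat \<Rightarrow> real" where
  "group_cutoffs s P a e =
     (if e = 0 then (if a = 0 then s 0 - 1 else s (a * P - 1))
      else if e = 1 then s (a * P)
      else if e = 2 then s (a * P + P - 1)
      else s (a * P + P))"

lemma group_cutoffs_ordered:
  assumes s: "strict_mono s" and "0 < P"
  shows "group_cutoffs s P a 0 < group_cutoffs s P a 1"
    and "group_cutoffs s P a 1 \<le> group_cutoffs s P a 2"
    and "group_cutoffs s P a 2 < group_cutoffs s P a 3"
  using assms strict_mono_less[OF s] strict_mono_less_eq[OF s]
  by (auto simp: group_cutoffs_def)

lemma sum_relu_bumps_select_group:
  assumes s: "strict_mono s" and P: "0 < P" and "\<rho> < A * P"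
  shows "(\<Sum>a<A. relu_bump (group_cutoffs s P a) (\<alpha> a) (\<gamma> a) (s \<rho>)) =
    \<alpha> (\<rho> div P) + \<gamma> (\<rho> div P) * s \<rho>"
proof -
  let ?c = "group_cutoffs s P"
  have vanish: "relu_bump (?c a) (\<alpha> a) (\<gamma> a) (s \<rho>) = 0" if "a \<noteq> \<rho> div P" for a
  proof (cases "a < \<rho> div P")
    case True
    then have "Suc a * P \<le> \<rho> div P * P"
      by (intro mult_le_mono1) simp
    also have "\<dots> \<le> \<rho>"
      by (rule div_times_less_eq_dividend)
    finally have "a * P + P \<le> \<rho>"
      by simp
    then have "?c a 3 \<le> s \<rho>"
      using strict_mono_less_eq[OF s] by (simp add: group_cutoffs_def)
    then show ?thesis
      using relu_bump_right group_cutoffs_ordered[OF s P] by blast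
  next
    case False
    with that have "\<rho> < a * P"
      using P by (simp add: div_less_iff_less_mult[symmetric])
    then have "s \<rho> \<le> ?c a 0"
      using strict_mono_less_eq[OF s] by (auto simp: group_cutoffs_def)
    then show ?thesis
      using relu_bump_left group_cutoffs_ordered[OF s P] by blast
  qed
  have "\<rho> div P * P \<le> \<rho>" "\<rho> < \<rho> div P * P + P"
    using P div_mult_mod_eq[of \<rho> P] mod_less_divisor[OF P, of \<rho>] by linarith+
  then have "?c (\<rho> div P) 1 \<le> s \<rho>" "s \<rho> \<le> ?c (\<rho> div P) 2"
    using strict_mono_less_eq[OF s] by (simp_all add: group_cutoffs_def)
  then have mid: "relu_bump (?c (\<rho> div P)) (\<alpha> (\<rho> div P)) (\<gamma> (\<rho> div P)) (s \<rho>) =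
      \<alpha> (\<rho> div P) + \<gamma> (\<rho> div P) * s \<rho>"
    using relu_bump_mid group_cutoffs_ordered[OF s P] by blast
  have "\<rho> div P < A"
    using P \<open>\<rho> < A * P\<close> by (simp add: div_less_iff_less_mult)
  then have "(\<Sum>a<A. relu_bump (?c a) (\<alpha> a) (\<gamma> a) (s \<rho>)) =
      (\<Sum>a\<in>{\<rho> div P}. relu_bump (?c a) (\<alpha> a) (\<gamma> a) (s \<rho>))"
    using vanish by (intro sum.mono_neutral_right) auto
  then show ?thesis
    using mid by simp
qed

lemma two_relu_layers_interpolate_increasing:
  fixes s :: "nat \<Rightarrow> real" and y :: "nat \<Rightarrow> nat \<Rightarrow> real"
  assumes s: "strict_mono s" and P: "0 < P" and d1: "4 * A \<le> d1" and d2: "r * P \<le> d2"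
  shows "\<exists>c W2 W3 b3. \<forall>\<rho><A * P. \<forall>m<r.
           affine d2 W3 b3 (relu \<circ> affine d1 W2 (\<lambda>_. 0) (relu \<circ> (\<lambda>j. s \<rho> - c j))) m = y \<rho> m"
proof -
  \<comment> \<open>An alternating sum of ReLUs is nonnegative at the first point of a group,
    so the targets are shifted by M and the output bias is -M.\<close>
  define M where "M = (\<Sum>\<rho><A * P. \<Sum>m<r. \<bar>y \<rho> m\<bar>)"
  have y_bound: "\<bar>y \<rho> m\<bar> \<le> M" if "\<rho> < A * P" "m < r" for \<rho> m
  proof -
    have "\<bar>y \<rho> m\<bar> \<le> (\<Sum>m<r. \<bar>y \<rho> m\<bar>)"
      using that by (intro member_le_sum) auto
    also have "\<dots> \<le> M"
      unfolding M_def using that by (intro member_le_sum sum_nonneg) auto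
    finally show ?thesis .
  qed
  define interpolates where "interpolates m a \<alpha> \<gamma> \<longleftrightarrow>
      (\<forall>p<P. (\<Sum>l<P. (-1) ^ l * relu (\<alpha> l + \<gamma> l * s (a * P + p))) = y (a * P + p) m + M)"
    for m a and \<alpha> \<gamma> :: "nat \<Rightarrow> real"
  have "\<exists>\<alpha> \<gamma>. interpolates m a \<alpha> \<gamma>" if "m < r" "a < A" for m a
  proof -
    have "strict_mono_on {..<P} (\<lambda>l. s (a * P + l))"
      using strict_mono_less[OF s] by (simp add: strict_mono_on_def)
    moreover have "a * P < A * P"
      using P that by simp
    then have "0 \<le> y (a * P + 0) m + M"
      using y_bound[of "a * P" m] that by simp
    ultimately show ?thesis
      unfolding interpolates_def
      by (rule exists_alternating_relu_interpolant[where s = "\<lambda>l. s (a * P + l)"])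
  qed
  then obtain \<alpha> \<gamma> where fit: "\<And>m a. m < r \<Longrightarrow> a < A \<Longrightarrow> interpolates m a (\<alpha> m a) (\<gamma> m a)"
    by metis
  define c where "c j = group_cutoffs s P (j div 4) (j mod 4)" for j
  define W2 where "W2 q j = (if j < 4 * A then bump_weight (group_cutoffs s P (j div 4))
      (\<alpha> (q div P) (j div 4) (q mod P)) (\<gamma> (q div P) (j div 4) (q mod P)) (j mod 4) else 0)" for q j
  define W3 where "W3 m q = (if q \<in> {m * P..<m * P + P} then (-1) ^ (q - m * P) else 0 :: real)" for m q
  have hidden_layer: "affine d1 W2 (\<lambda>_. 0) (relu \<circ> (\<lambda>j. s \<rho> - c j)) q =
      \<alpha> (q div P) (\<rho> div P) (q mod P) + \<gamma> (q div P) (\<rho> div P) (q mod P) * s \<rho>"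
    if "\<rho> < A * P" for \<rho> q
  proof -
    have "affine d1 W2 (\<lambda>_. 0) (relu \<circ> (\<lambda>j. s \<rho> - c j)) q = (\<Sum>j<A * 4. W2 q j * relu (s \<rho> - c j))"
      unfolding affine_def using d1 by (simp, intro sum.mono_neutral_right) (auto simp: W2_def)
    also have "\<dots> = (\<Sum>a<A. relu_bump (group_cutoffs s P a)
        (\<alpha> (q div P) a (q mod P)) (\<gamma> (q div P) a (q mod P)) (s \<rho>))"
      unfolding sum_mult_product relu_bump_def by (intro sum.cong refl) (simp add: W2_def c_def)
    also have "\<dots> = \<alpha> (q div P) (\<rho> div P) (q mod P) + \<gamma> (q div P) (\<rho> div P) (q mod P) * s \<rho>"
      by (rule sum_relu_bumps_select_group[OF s P that])
    finally show ?thesis .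
  qed
  have output_layer: "affine d2 W3 (\<lambda>_. - M) h m = (\<Sum>l<P. (-1) ^ l * h (m * P + l)) - M"
    if "m < r" for h m
  proof -
    have "m * P + P \<le> d2"
      using mult_le_mono1[of "Suc m" r P] that d2 by simp
    then have "affine d2 W3 (\<lambda>_. - M) h m = (\<Sum>q\<in>{m * P..<m * P + P}. (-1) ^ (q - m * P) * h q) - M"
      unfolding affine_def by (simp, intro sum.mono_neutral_cong_right) (auto simp: W3_def)
    also have "\<dots> = (\<Sum>l<P. (-1) ^ l * h (m * P + l)) - M"
      by (simp add: sum.atLeastLessThan_shift_0 atLeast0LessThan)
    finally show ?thesis .
  qed
  show ?thesis
  proof (intro exI allI impI)
    fix \<rho> m assume \<rho>: "\<rho> < A * P" and m: "m < r"
    have "\<rho> div P < A" "\<rho> mod P < P" and \<rho>_eq: "\<rho> = \<rho> div P * P + \<rho> mod P"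
      using \<rho> P by (simp_all add: div_less_iff_less_mult)
    have "affine d2 W3 (\<lambda>_. - M) (relu \<circ> affine d1 W2 (\<lambda>_. 0) (relu \<circ> (\<lambda>j. s \<rho> - c j))) m =
        (\<Sum>l<P. (-1) ^ l * relu (\<alpha> m (\<rho> div P) l + \<gamma> m (\<rho> div P) l * s \<rho>)) - M"
      using P by (simp add: output_layer[OF m] hidden_layer[OF \<rho>])
    also have "\<dots> = y \<rho> m"
      using fit[OF m \<open>\<rho> div P < A\<close>, unfolded interpolates_def, rule_format, OF \<open>\<rho> mod P < P\<close>]
      by (simp flip: \<rho>_eq)
    finally show "affine d2 W3 (\<lambda>_. - M) (relu \<circ> affine d1 W2 (\<lambda>_. 0) (relu \<circ> (\<lambda>j. s \<rho> - c j))) m =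
        y \<rho> m" .
  qed
qed

lemma two_relu_layers_interpolate_distinct:
  fixes t :: "nat \<Rightarrow> real" and z :: "nat \<Rightarrow> nat \<Rightarrow> real"
  assumes inj: "inj_on t {..<n}" and "n \<le> A * P" "0 < P" "4 * A \<le> d1" "r * P \<le> d2"
  shows "\<exists>c W2 W3 b3. \<forall>i<n. \<forall>m<r.
           affine d2 W3 b3 (relu \<circ> affine d1 W2 (\<lambda>_. 0) (relu \<circ> (\<lambda>j. t i - c j))) m = z i m"
proof -
  obtain s where s: "strict_mono s" and s_range: "s ` {..<n} = t ` {..<n}"
    using finite_real_set_strict_mono_enumeration[of "t ` {..<n}"] inj by (auto simp: card_image)
  obtain c W2 W3 b3 where net: "\<forall>\<rho><A * P. \<forall>m<r.
      affine d2 W3 b3 (relu \<circ> affine d1 W2 (\<lambda>_. 0) (relu \<circ> (\<lambda>j. s \<rho> - c j))) m =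
      z (inv_into {..<n} t (s \<rho>)) m"
    using two_relu_layers_interpolate_increasing[OF s assms(3-5),
        where y = "\<lambda>\<rho>. z (inv_into {..<n} t (s \<rho>))"] by blast
  have "affine d2 W3 b3 (relu \<circ> affine d1 W2 (\<lambda>_. 0) (relu \<circ> (\<lambda>j. t i - c j))) m = z i m"
    if "i < n" "m < r" for i m
  proof -
    have "t i \<in> s ` {..<n}"
      using s_range that by simp
    then obtain \<rho> where "\<rho> < n" "s \<rho> = t i"
      by auto
    moreover have "inv_into {..<n} t (t i) = i"
      using inj that by (simp add: inv_into_f_f)
    ultimately show ?thesis
      using net[rule_format, of \<rho> m] \<open>n \<le> A * P\<close> that by simp
  qed
  then show ?thesis
    by blast
qed

theorem mainTheorem1:
  fixes n k r d1 d2 :: nat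
    and x :: "nat \<Rightarrow> nat \<Rightarrow> real"   (* x i \<in> R^k, coordinates x i l, l < k *)
    and z :: "nat \<Rightarrow> nat \<Rightarrow> real"   (* z i \<in> R^r, coordinates z i m, m < r *)
  assumes "n \<ge> 1" "k \<ge> 1" "r \<ge> 1" "d1 \<ge> 1" "d2 \<ge> 1"
    and distinct: "\<And>i j. i < n \<Longrightarrow> j < n \<Longrightarrow> i \<noteq> j \<Longrightarrow> (\<exists>l<k. x i l \<noteq> x j l)"
    and width: "4 * (d1 div 4) * (d2 div (4 * r)) \<ge> n"
  shows "\<exists>W1 b1 W2 b2 W3 b3.
           \<forall>i<n. \<forall>m<r. relu_net3 k d1 d2 W1 b1 W2 b2 W3 b3 (x i) m = z i m"
proof -
  obtain v where "inj_on (\<lambda>i. \<Sum>l<k. v ^ l * x i l) {..<n}"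
    using exists_injective_power_projection[of "{..<n}" k x] distinct by auto
  define A where "A = d1 div 4"
  define P where "P = 4 * (d2 div (4 * r))"
  have "n \<le> A * P" "4 * A \<le> d1"
    using width by (simp_all add: A_def P_def mult.assoc mult.left_commute)
  have "r * P \<le> d2"
    using div_times_less_eq_dividend[of d2 "4 * r"] by (simp add: P_def ac_simps)
  have "0 < P"
    using \<open>n \<le> A * P\<close> \<open>n \<ge> 1\<close> by (auto intro: gr0I)
  obtain c W2 W3 b3 where "\<forall>i<n. \<forall>m<r. affine d2 W3 b3 (relu \<circ> affine d1 W2 (\<lambda>_. 0)
      (relu \<circ> (\<lambda>j. (\<Sum>l<k. v ^ l * x i l) - c j))) m = z i m"
    using two_relu_layers_interpolate_distinct[where z = z] \<open>inj_on _ {..<n}\<close> \<open>n \<le> A * P\<close> \<open>0 < P\<close>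
      \<open>4 * A \<le> d1\<close> \<open>r * P \<le> d2\<close> by blast
  moreover have "affine k (\<lambda>j l. v ^ l) (\<lambda>j. - c j) (x i) = (\<lambda>j. (\<Sum>l<k. v ^ l * x i l) - c j)" for i
    by (simp add: affine_def)
  ultimately have "\<forall>i<n. \<forall>m<r. relu_net3 k d1 d2 (\<lambda>j l. v ^ l) (\<lambda>j. - c j) W2 (\<lambda>_. 0) W3 b3 (x i) m = z i m"
    by (simp add: relu_net3_def)
  then show ?thesis
    by blast
qed

end
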